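(* Fix $0<q<1$. Let $\psi$ be a measurable function on $[1,\infty)$ with $\psi\ge0$, $\psi$ not identically $0$, and $\sup_{\mu\ge1}\{\psi(\mu)/\mu\}<\infty$. Then for $G=E\#F\in\mathcal G$ and $0<\tau<T_q(G)$, $$\int\psi(\mu)\big[e^{-\tau/\mu}-e^{-T_q(G)/\mu}\big]\,dF(\mu)\le\frac1q\sup_{\mu\ge1}\{\psi(\mu)/\mu\}\cdot\frac{\tau e^{-\tau}}{1-e^{-\tau}}.$$
   Context: $E(t)=1-e^{-t}$, $\bar E=1-E$, $\bar G=1-G$. $\mathcal G=\{E\#F:F$ a probability distribution on $[1,\infty)\}$ with $(E\#F)(t)=\int E(t/\mu)\,dF(\mu)$. FDR functional $T_q(G)=\inf\{t:\bar G(t)\ge\frac1q\bar E(t)\}$. *)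

theory Defs
  imports "HOL-Probability.Probability"
begin

definition Eexp :: "real \<Rightarrow> real" where
  "Eexp t = 1 - exp (- t)"

definition mixG :: "real measure \<Rightarrow> real \<Rightarrow> real" where
  "mixG F t = (\<integral>\<mu>. Eexp (t / \<mu>) \<partial>F)"

definition dist_on_one_inf :: "real measure \<Rightarrow> bool" where
  "dist_on_one_inf F \<longleftrightarrow> prob_space F \<and> sets F = sets borel \<and> measure F {1..} = 1"

text \<open>FDR functional T_q(G) = inf{t : 1 - G(t) \<ge> (1/q)(1 - E(t))}, valued in the
  extended reals (the infimum of the empty set is +\<infinity>).\<close>
definition Tq :: "real \<Rightarrow> (real \<Rightarrow> real) \<Rightarrow> ereal" where
  "Tq q G = Inf {ereal t | t. 1 - G t \<ge> (1 / q) * (1 - Eexp t)}"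

definition exp_neg_div :: "ereal \<Rightarrow> real \<Rightarrow> real" where
  "exp_neg_div T \<mu> = (if T = \<infinity> then 0 else exp (- real_of_ereal T / \<mu>))"

end

theory Submission
  imports Defs
begin

text \<open>Let \<open>S = sup \<psi>(\<mu>)/\<mu>\<close> and \<open>T = T\<^sub>q(G)\<close>. Because \<open>\<mu> (1 - exp(-\<tau>/\<mu>)) \<le> \<tau>\<close>,
  telescoping along the grid \<open>\<tau>, 2\<tau>, 3\<tau>, ...\<close> bounds the integrand by \<open>S \<tau>\<close> times the sum of
  \<open>exp(-k\<tau>/\<mu>)\<close> over the \<open>k \<ge> 1\<close> with \<open>k\<tau> < T\<close>. Integrating term by term turns \<open>exp(-k\<tau>/\<mu>)\<close>
  into \<open>1 - G(k\<tau>)\<close>, which is below \<open>exp(-k\<tau>)/q\<close> because \<open>k\<tau> < T\<^sub>q(G)\<close>; summing the geometric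
  series gives the bound.\<close>

lemma mult_one_minus_exp_neg_div_le:
  fixes \<mu> \<tau> :: real
  assumes "0 < \<mu>"
  shows "\<mu> * (1 - exp (- \<tau> / \<mu>)) \<le> \<tau>"
proof -
  have "1 - \<tau> / \<mu> \<le> exp (- \<tau> / \<mu>)"
    using exp_ge_add_one_self[of "- \<tau> / \<mu>"] by simp
  then show ?thesis
    using assms by (simp add: field_simps)
qed

lemma exp_neg_mult_div_eq_power:
  fixes \<tau> \<mu> :: real
  shows "exp (- (real n * \<tau>) / \<mu>) = exp (- \<tau> / \<mu>) ^ n"
  by (simp flip: exp_of_nat_mult)

lemma mult_exp_neg_div_diff_power_le:
  fixes \<mu> \<tau> :: real
  assumes "0 < \<mu>" "0 \<le> \<tau>"
  shows "\<mu> * (exp (- \<tau> / \<mu>) - exp (- \<tau> / \<mu>) ^ Suc n) \<le> \<tau> * (\<Sum>k<n. exp (- \<tau> / \<mu>) ^ Suc k)"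
proof -
  let ?r = "exp (- \<tau> / \<mu>)"
  have "(1 - ?r) * (\<Sum>k<n. ?r ^ Suc k) = ?r * ((1 - ?r) * (\<Sum>k<n. ?r ^ k))"
    by (simp add: sum_distrib_left mult_ac)
  also have "\<dots> = ?r - ?r ^ Suc n"
    unfolding one_diff_power_eq[symmetric] by (simp add: algebra_simps)
  finally have "\<mu> * (?r - ?r ^ Suc n) = \<mu> * (1 - ?r) * (\<Sum>k<n. ?r ^ Suc k)"
    by simp
  also have "\<dots> \<le> \<tau> * (\<Sum>k<n. ?r ^ Suc k)"
    using mult_one_minus_exp_neg_div_le[OF assms(1)] by (intro mult_right_mono sum_nonneg) auto
  finally show ?thesis .
qed

lemma exp_neg_div_le:
  assumes "0 < \<mu>" "ereal \<tau> < T"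
  shows "exp_neg_div T \<mu> \<le> exp (- \<tau> / \<mu>)"
proof (cases T)
  case (real T')
  then have "- T' / \<mu> \<le> - \<tau> / \<mu>"
    using assms by (intro divide_right_mono) auto
  then show ?thesis
    using real by (simp add: exp_neg_div_def)
qed (use assms in \<open>auto simp: exp_neg_div_def\<close>)

definition grid_term :: "ereal \<Rightarrow> real \<Rightarrow> nat \<Rightarrow> real \<Rightarrow> real" where
  "grid_term T \<tau> k \<mu> =
     (if ereal (real (Suc k) * \<tau>) < T then exp (- (real (Suc k) * \<tau>) / \<mu>) else 0)"

lemma grid_term_nonneg: "0 \<le> grid_term T \<tau> k \<mu>"
  by (simp add: grid_term_def)

lemma grid_term_eq_power:
  "ereal (real (Suc k) * \<tau>) < T \<Longrightarrow> grid_term T \<tau> k \<mu> = exp (- \<tau> / \<mu>) ^ Suc k"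
  unfolding grid_term_def exp_neg_mult_div_eq_power by simp

lemma grid_term_le_power: "grid_term T \<tau> k \<mu> \<le> exp (- \<tau> / \<mu>) ^ Suc k"
  unfolding grid_term_def exp_neg_mult_div_eq_power by simp

lemma summable_grid_term:
  assumes "0 < \<mu>" "0 < \<tau>"
  shows "summable (\<lambda>k. grid_term T \<tau> k \<mu>)"
proof (rule summable_comparison_test')
  have "exp (- \<tau> / \<mu>) < 1"
    using assms by simp
  then show "summable (\<lambda>k. exp (- \<tau> / \<mu>) ^ Suc k)"
    by (simp add: summable_mult)
  show "norm (grid_term T \<tau> k \<mu>) \<le> exp (- \<tau> / \<mu>) ^ Suc k" for k
    by (metis abs_of_nonneg grid_term_nonneg grid_term_le_power real_norm_def)
qed

lemma mult_exp_gap_le_suminf_grid_term: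
  assumes "0 < \<mu>" "0 < \<tau>" "ereal \<tau> < T"
  shows "\<mu> * (exp (- \<tau> / \<mu>) - exp_neg_div T \<mu>) \<le> \<tau> * (\<Sum>k. grid_term T \<tau> k \<mu>)"
proof -
  let ?r = "exp (- \<tau> / \<mu>)"
  have partial: "\<mu> * (?r - ?r ^ Suc n) \<le> \<tau> * (\<Sum>k. grid_term T \<tau> k \<mu>)"
    if "\<forall>k<n. ereal (real (Suc k) * \<tau>) < T" for n
  proof -
    have "(\<Sum>k<n. ?r ^ Suc k) = (\<Sum>k<n. grid_term T \<tau> k \<mu>)"
      using that by (simp add: grid_term_eq_power)
    also have "\<dots> \<le> (\<Sum>k. grid_term T \<tau> k \<mu>)"
      using summable_grid_term[OF assms(1,2)] by (rule sum_le_suminf) (auto simp: grid_term_nonneg)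
    finally have "(\<Sum>k<n. ?r ^ Suc k) \<le> (\<Sum>k. grid_term T \<tau> k \<mu>)" .
    then show ?thesis
      using mult_exp_neg_div_diff_power_le[OF assms(1), of \<tau> n] assms(2)
      by (meson less_imp_le mult_left_mono order_trans)
  qed
  show ?thesis
  proof (cases T)
    case (real T')
    obtain m where "T' / \<tau> < real m"
      using reals_Archimedean2 by blast
    then have "\<exists>n. T' \<le> real (Suc n) * \<tau>"
      using assms(2) by (intro exI[of _ m]) (simp add: field_simps)
    then obtain n where n: "T' \<le> real (Suc n) * \<tau>" and below: "\<forall>k<n. real (Suc k) * \<tau> < T'"
      unfolding exists_least_iff[of "\<lambda>n. T' \<le> real (Suc n) * \<tau>"] by (auto simp: not_le)
    have "?r ^ Suc n = exp (- (real (Suc n) * \<tau>) / \<mu>)"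
      by (rule exp_neg_mult_div_eq_power[symmetric])
    also have "\<dots> \<le> exp (- T' / \<mu>)"
      using n assms(1) by (simp add: divide_right_mono)
    finally have "?r ^ Suc n \<le> exp (- T' / \<mu>)" .
    then have "\<mu> * (?r - exp (- T' / \<mu>)) \<le> \<mu> * (?r - ?r ^ Suc n)"
      using assms(1) by (intro mult_left_mono) auto
    also have "\<dots> \<le> \<tau> * (\<Sum>k. grid_term T \<tau> k \<mu>)"
      using partial below real by simp
    finally show ?thesis
      using real by (simp add: exp_neg_div_def)
  next
    case PInf
    have "?r < 1"
      using assms by simp
    then have "(\<lambda>n. \<mu> * (?r - ?r ^ Suc n)) \<longlonglongrightarrow> \<mu> * (?r - 0)"
      by (intro tendsto_intros LIMSEQ_Suc LIMSEQ_power_zero) simp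
    then have "\<mu> * (?r - 0) \<le> \<tau> * (\<Sum>k. grid_term T \<tau> k \<mu>)"
      by (rule LIMSEQ_le_const2) (use partial PInf in auto)
    then show ?thesis
      using PInf by (simp add: exp_neg_div_def)
  qed (use assms in auto)
qed

lemma weighted_exp_gap_le_suminf_grid_term:
  assumes "0 < \<mu>" "0 < \<tau>" "ereal \<tau> < T" "0 \<le> S" "c \<le> S * \<mu>"
  shows "c * (exp (- \<tau> / \<mu>) - exp_neg_div T \<mu>) \<le> S * \<tau> * (\<Sum>k. grid_term T \<tau> k \<mu>)"
proof -
  have "0 \<le> exp (- \<tau> / \<mu>) - exp_neg_div T \<mu>"
    using exp_neg_div_le[OF assms(1,3)] by simp
  then have "c * (exp (- \<tau> / \<mu>) - exp_neg_div T \<mu>) \<le> S * (\<mu> * (exp (- \<tau> / \<mu>) - exp_neg_div T \<mu>))"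
    using mult_right_mono[OF assms(5)] by (simp add: mult.assoc)
  also have "\<dots> \<le> S * (\<tau> * (\<Sum>k. grid_term T \<tau> k \<mu>))"
    using mult_exp_gap_le_suminf_grid_term[OF assms(1-3)] assms(4) by (rule mult_left_mono)
  finally show ?thesis
    by (simp add: mult.assoc)
qed

lemma one_minus_lt_of_less_Tq:
  assumes "ereal t < Tq q G"
  shows "1 - G t < exp (- t) / q"
proof (rule ccontr)
  assume "\<not> ?thesis"
  then have "(1 / q) * (1 - Eexp t) \<le> 1 - G t"
    by (simp add: Eexp_def)
  then have "Tq q G \<le> ereal t"
    unfolding Tq_def by (intro Inf_lower) blast
  then show False
    using assms by simp
qed

lemma
  assumes "dist_on_one_inf F"
  shows prob_space_dist_on_one_inf: "prob_space F"
    and AE_dist_on_one_inf_ge_one: "AE \<mu> in F. 1 \<le> \<mu>"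
    and borel_measurable_dist_on_one_inf: "f \<in> borel_measurable borel \<Longrightarrow> f \<in> borel_measurable F"
proof -
  have F: "prob_space F" "sets F = sets borel" "measure F {1..} = 1"
    using assms unfolding dist_on_one_inf_def by auto
  show "prob_space F"
    by (fact F(1))
  have "AE \<mu> in F. \<mu> \<in> {1..}"
    using prob_space.AE_in_set_eq_1[OF F(1), of "{1..}"] F(2,3) by simp
  then show "AE \<mu> in F. 1 \<le> \<mu>"
    by simp
  show "f \<in> borel_measurable F" if "f \<in> borel_measurable borel"
    by (subst measurable_cong_sets[OF F(2) refl]) (fact that)
qed

lemma integrable_exp_neg_div:
  assumes "dist_on_one_inf F" "0 \<le> t"
  shows "integrable F (\<lambda>\<mu>. exp (- t / \<mu>))"
proof -
  interpret prob_space F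
    using prob_space_dist_on_one_inf[OF assms(1)] .
  show ?thesis
  proof (rule integrable_const_bound[where B = 1])
    show "AE \<mu> in F. norm (exp (- t / \<mu>)) \<le> 1"
      using AE_dist_on_one_inf_ge_one[OF assms(1)] by eventually_elim (use assms(2) in simp)
  qed (rule borel_measurable_dist_on_one_inf[OF assms(1)], measurable)
qed

lemma one_minus_mixG_eq_integral:
  assumes "dist_on_one_inf F" "0 \<le> t"
  shows "1 - mixG F t = (\<integral>\<mu>. exp (- t / \<mu>) \<partial>F)"
proof -
  interpret prob_space F
    using prob_space_dist_on_one_inf[OF assms(1)] .
  have "mixG F t = (\<integral>\<mu>. 1 - exp (- t / \<mu>) \<partial>F)"
    unfolding mixG_def Eexp_def by simp
  also have "\<dots> = 1 - (\<integral>\<mu>. exp (- t / \<mu>) \<partial>F)"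
    using integrable_exp_neg_div[OF assms] by (simp add: prob_space)
  finally show ?thesis
    by simp
qed

lemma integrable_grid_term:
  assumes "dist_on_one_inf F" "0 < \<tau>"
  shows "integrable F (grid_term T \<tau> k)"
proof (cases "ereal (real (Suc k) * \<tau>) < T")
  case True
  then show ?thesis
    using integrable_exp_neg_div[OF assms(1), of "real (Suc k) * \<tau>"] assms(2)
    unfolding grid_term_def by simp
qed (unfold grid_term_def, simp)

lemma integral_grid_term_le:
  assumes "dist_on_one_inf F" "0 < q" "0 < \<tau>"
  shows "(\<integral>\<mu>. grid_term (Tq q (mixG F)) \<tau> k \<mu> \<partial>F) \<le> exp (- \<tau>) ^ Suc k / q"
proof (cases "ereal (real (Suc k) * \<tau>) < Tq q (mixG F)")
  case True
  have "(\<integral>\<mu>. grid_term (Tq q (mixG F)) \<tau> k \<mu> \<partial>F) = 1 - mixG F (real (Suc k) * \<tau>)"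
    using True assms by (simp add: grid_term_def one_minus_mixG_eq_integral)
  also have "\<dots> < exp (- (real (Suc k) * \<tau>)) / q"
    using True by (rule one_minus_lt_of_less_Tq)
  also have "\<dots> = exp (- \<tau>) ^ Suc k / q"
    by (metis exp_of_nat_mult mult_minus_right)
  finally show ?thesis
    by simp
qed (use assms in \<open>simp add: grid_term_def\<close>)

lemma
  assumes "dist_on_one_inf F" "0 < q" "0 < \<tau>"
  defines "T \<equiv> Tq q (mixG F)"
  shows integrable_suminf_grid_term: "integrable F (\<lambda>\<mu>. \<Sum>k. grid_term T \<tau> k \<mu>)"
    and integral_suminf_grid_term_le:
      "(\<integral>\<mu>. (\<Sum>k. grid_term T \<tau> k \<mu>) \<partial>F) \<le> exp (- \<tau>) / (1 - exp (- \<tau>)) / q"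
proof -
  have integrable: "integrable F (grid_term T \<tau> k)" for k
    using assms(1,3) by (rule integrable_grid_term)
  have summable_pointwise: "AE \<mu> in F. summable (\<lambda>k. norm (grid_term T \<tau> k \<mu>))"
    using AE_dist_on_one_inf_ge_one[OF assms(1)]
    by eventually_elim (use assms(3) in \<open>simp add: grid_term_nonneg summable_grid_term\<close>)
  have "exp (- \<tau>) < 1"
    using assms(3) by simp
  then have "(\<lambda>k. exp (- \<tau>) / q * exp (- \<tau>) ^ k) sums (exp (- \<tau>) / q * (1 / (1 - exp (- \<tau>))))"
    by (intro sums_mult geometric_sums) simp
  then have geometric: "(\<lambda>k. exp (- \<tau>) ^ Suc k / q) sums (exp (- \<tau>) / (1 - exp (- \<tau>)) / q)"
    by (simp add: mult_ac)
  have integral_bound: "norm (\<integral>\<mu>. norm (grid_term T \<tau> k \<mu>) \<partial>F) \<le> exp (- \<tau>) ^ Suc k / q" for k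
    using integral_grid_term_le[OF assms(1-3), of k] integral_nonneg_AE[of "grid_term T \<tau> k" F]
    by (simp add: T_def grid_term_nonneg)
  have summable_integral: "summable (\<lambda>k. \<integral>\<mu>. norm (grid_term T \<tau> k \<mu>) \<partial>F)"
    by (rule summable_comparison_test'[OF sums_summable[OF geometric]]) (rule integral_bound)
  show "integrable F (\<lambda>\<mu>. \<Sum>k. grid_term T \<tau> k \<mu>)"
    using integrable summable_pointwise summable_integral by (rule integrable_suminf)
  have "(\<integral>\<mu>. (\<Sum>k. grid_term T \<tau> k \<mu>) \<partial>F) = (\<Sum>k. \<integral>\<mu>. grid_term T \<tau> k \<mu> \<partial>F)"
    using integrable summable_pointwise summable_integral by (rule integral_suminf)
  also have "\<dots> \<le> (\<Sum>k. exp (- \<tau>) ^ Suc k / q)"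
    using integral_bound summable_integral sums_summable[OF geometric]
    by (intro suminf_le) (auto simp: grid_term_nonneg)
  also have "\<dots> = exp (- \<tau>) / (1 - exp (- \<tau>)) / q"
    using geometric by (rule sums_unique[symmetric])
  finally show "(\<integral>\<mu>. (\<Sum>k. grid_term T \<tau> k \<mu>) \<partial>F) \<le> exp (- \<tau>) / (1 - exp (- \<tau>)) / q" .
qed

lemma integral_le_of_AE_le_suminf_grid_term:
  assumes "dist_on_one_inf F" "0 < q" "0 < \<tau>" "0 \<le> c"
    and "AE \<mu> in F. g \<mu> \<le> c * (\<Sum>k. grid_term (Tq q (mixG F)) \<tau> k \<mu>)"
  shows "(\<integral>\<mu>. g \<mu> \<partial>F) \<le> c * (exp (- \<tau>) / (1 - exp (- \<tau>)) / q)"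
proof -
  let ?h = "\<lambda>\<mu>. c * (\<Sum>k. grid_term (Tq q (mixG F)) \<tau> k \<mu>)"
  have "(\<integral>\<mu>. g \<mu> \<partial>F) \<le> (\<integral>\<mu>. ?h \<mu> \<partial>F)"
  proof (rule integral_mono_AE')
    show "integrable F ?h"
      using integrable_suminf_grid_term[OF assms(1-3)] by simp
    show "AE \<mu> in F. 0 \<le> ?h \<mu>"
      using AE_dist_on_one_inf_ge_one[OF assms(1)] by eventually_elim
        (use assms(3,4) in \<open>simp add: suminf_nonneg summable_grid_term grid_term_nonneg\<close>)
  qed (fact assms(5))
  also have "\<dots> = c * (\<integral>\<mu>. (\<Sum>k. grid_term (Tq q (mixG F)) \<tau> k \<mu>) \<partial>F)"
    by (rule integral_mult_right_zero)
  also have "\<dots> \<le> c * (exp (- \<tau>) / (1 - exp (- \<tau>)) / q)"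
    using integral_suminf_grid_term_le[OF assms(1-3)] assms(4) by (rule mult_left_mono)
  finally show ?thesis .
qed

lemma le_Sup_ratio_mult:
  fixes \<psi> :: "real \<Rightarrow> real"
  assumes "bdd_above {\<psi> \<mu> / \<mu> | \<mu>. \<mu> \<ge> 1}" "1 \<le> \<mu>"
  shows "\<psi> \<mu> \<le> Sup {\<psi> \<mu> / \<mu> | \<mu>. \<mu> \<ge> 1} * \<mu>"
  using cSup_upper[OF _ assms(1), of "\<psi> \<mu> / \<mu>"] assms(2) by (auto simp: divide_le_eq)

theorem lemma5p6:
  fixes q \<tau> :: real and \<psi> :: "real \<Rightarrow> real" and F :: "real measure"
  assumes q: "0 < q" "q < 1"
    and \<psi>_meas: "\<psi> \<in> borel_measurable borel"
    and \<psi>_nonneg: "\<forall>\<mu>\<ge>1. \<psi> \<mu> \<ge> 0"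
    and \<psi>_nonzero: "\<exists>\<mu>\<ge>1. \<psi> \<mu> \<noteq> 0"
    and \<psi>_bdd: "bdd_above {\<psi> \<mu> / \<mu> | \<mu>. \<mu> \<ge> 1}"
    and F: "dist_on_one_inf F"
    and \<tau>: "0 < \<tau>" "ereal \<tau> < Tq q (mixG F)"
  shows "(\<integral>\<mu>. \<psi> \<mu> * (exp (- \<tau> / \<mu>) - exp_neg_div (Tq q (mixG F)) \<mu>) \<partial>F)
           \<le> (1 / q) * Sup {\<psi> \<mu> / \<mu> | \<mu>. \<mu> \<ge> 1} * (\<tau> * exp (- \<tau>) / (1 - exp (- \<tau>)))"
proof -
  define S where "S = Sup {\<psi> \<mu> / \<mu> | \<mu>. \<mu> \<ge> 1}"
  have \<psi>_le: "\<psi> \<mu> \<le> S * \<mu>" if "1 \<le> \<mu>" for \<mu>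
    unfolding S_def using \<psi>_bdd that by (rule le_Sup_ratio_mult)
  have "0 \<le> S"
    using \<psi>_le[of 1] \<psi>_nonneg by auto
  have "AE \<mu> in F. \<psi> \<mu> * (exp (- \<tau> / \<mu>) - exp_neg_div (Tq q (mixG F)) \<mu>)
      \<le> (S * \<tau>) * (\<Sum>k. grid_term (Tq q (mixG F)) \<tau> k \<mu>)"
    using AE_dist_on_one_inf_ge_one[OF F] by eventually_elim
      (intro weighted_exp_gap_le_suminf_grid_term \<psi>_le \<tau> \<open>0 \<le> S\<close>, simp_all)
  then have "(\<integral>\<mu>. \<psi> \<mu> * (exp (- \<tau> / \<mu>) - exp_neg_div (Tq q (mixG F)) \<mu>) \<partial>F)
      \<le> (S * \<tau>) * (exp (- \<tau>) / (1 - exp (- \<tau>)) / q)"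
    using \<open>0 \<le> S\<close> \<tau>(1) by (intro integral_le_of_AE_le_suminf_grid_term[OF F q(1) \<tau>(1)]) auto
  then show ?thesis
    by (simp add: S_def field_simps)
qed

end
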